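(* Let $d<\infty$, let $V\subset\mathbb{B}_d$ be an analytic disc attached to the unit sphere and $f$ its embedding map, and suppose $f(-1)=f(1)$. Let $h\in\mathcal{H}_f$ be such that the limits $h(1)=\lim_{r\to1^-}h(r)$ and $h(-1)=\lim_{r\to1^-}h(-r)$ exist. Then $h(1)=h(-1)$.
   Context: $\mathbb{D}$ is the open unit disc, $\mathbb{B}_d$ the open unit ball of $\mathbb{C}^d$. The Drury–Arveson space $H^2_d$ is the RKHS on $\mathbb{B}_d$ with kernel $1/(1-\langle z,w\rangle)$, with multiplier algebra $\mathcal{M}_d$. A variety is a common zero set in $\mathbb{B}_d$ of a family of functions from $\mathcal{M}_d$. An analytic disc attached to the unit sphere is a variety $V\subset\mathbb{B}_d$ ($d<\infty$) for which there is an injective analytic $f:\mathbb{D}\to\mathbb{B}_d$ with $f'(z)\neq0$ on $\mathbb{D}$, $V=f(\mathbb{D})$, $f$ extends to a $C^2$ map on $\overline{\mathbb{D}}$, and for $x\in\overline{\mathbb{D}}$, $\|f(x)\|=1$ iff $|x|=1$ ($f$ is the embedding map). $\mathcal{H}_f$ is the RKHS on $\mathbb{D}$ with kernel $k^f(z,w)=1/(1-\langle f(z),f(w)\rangle)$. *)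

theory Defs
  imports "HOL-Complex_Analysis.Complex_Analysis"
begin

definition lincomb :: "('a \<Rightarrow> 'a \<Rightarrow> complex) \<Rightarrow> (complex \<times> 'a) list \<Rightarrow> 'a \<Rightarrow> complex" where
  "lincomb K cs z = (\<Sum>(a, w)\<leftarrow>cs. a * K z w)"

definition lcnorm2 :: "('a \<Rightarrow> 'a \<Rightarrow> complex) \<Rightarrow> (complex \<times> 'a) list \<Rightarrow> real" where
  "lcnorm2 K cs = Re (\<Sum>(a, w)\<leftarrow>cs. \<Sum>(b, v)\<leftarrow>cs. a * cnj b * K v w)"

definition lcdiff :: "(complex \<times> 'a) list \<Rightarrow> (complex \<times> 'a) list \<Rightarrow> (complex \<times> 'a) list" where
  "lcdiff cs ds = cs @ map (\<lambda>(b, v). (- b, v)) ds"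

definition in_rkhs :: "'a set \<Rightarrow> ('a \<Rightarrow> 'a \<Rightarrow> complex) \<Rightarrow> ('a \<Rightarrow> complex) \<Rightarrow> bool" where
  "in_rkhs X K h \<longleftrightarrow>
     (\<exists>s :: nat \<Rightarrow> (complex \<times> 'a) list.
        (\<forall>n. snd ` set (s n) \<subseteq> X) \<and>
        (\<forall>e>0. \<exists>N. \<forall>m\<ge>N. \<forall>n\<ge>N. lcnorm2 K (lcdiff (s m) (s n)) < e) \<and>
        (\<forall>z\<in>X. (\<lambda>n. lincomb K (s n) z) \<longlonglongrightarrow> h z))"

definition cinner :: "complex ^ 'n \<Rightarrow> complex ^ 'n \<Rightarrow> complex" where
  "cinner z w = (\<Sum>i\<in>UNIV. z $ i * cnj (w $ i))"

definition DA_kernel :: "complex ^ 'n \<Rightarrow> complex ^ 'n \<Rightarrow> complex" where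
  "DA_kernel z w = 1 / (1 - cinner z w)"

definition DA_multiplier :: "(complex ^ 'n \<Rightarrow> complex) \<Rightarrow> bool" where
  "DA_multiplier \<phi> \<longleftrightarrow>
     (\<forall>h. in_rkhs (ball 0 1) DA_kernel h \<longrightarrow> in_rkhs (ball 0 1) DA_kernel (\<lambda>z. \<phi> z * h z))"

definition DA_variety :: "(complex ^ 'n) set \<Rightarrow> bool" where
  "DA_variety V \<longleftrightarrow>
     (\<exists>F. (\<forall>\<phi>\<in>F. DA_multiplier \<phi>) \<and> V = {z \<in> ball 0 1. \<forall>\<phi>\<in>F. \<phi> z = 0})"

definition C1_on :: "complex set \<Rightarrow> (complex \<Rightarrow> 'b::real_normed_vector) \<Rightarrow> bool" where
  "C1_on U g \<longleftrightarrow> (\<exists>D. (\<forall>x\<in>U. (g has_derivative D x) (at x)) \<and>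
                       continuous_on U (\<lambda>x. D x 1) \<and> continuous_on U (\<lambda>x. D x \<i>))"

definition C2_on :: "complex set \<Rightarrow> (complex \<Rightarrow> 'b::real_normed_vector) \<Rightarrow> bool" where
  "C2_on U g \<longleftrightarrow> (\<exists>D. (\<forall>x\<in>U. (g has_derivative D x) (at x)) \<and>
                       C1_on U (\<lambda>x. D x 1) \<and> C1_on U (\<lambda>x. D x \<i>))"

text \<open>f is an embedding map of the analytic disc V attached to the unit sphere.
  f is given on all of the complex plane; only its values on the closed disc matter.
  "f extends to a C^2 map on the closed disc" is rendered as: f agrees on the closed
  disc with a C^2 map on some open neighbourhood of the closed disc.\<close>

definition embedding_map :: "(complex \<Rightarrow> complex ^ 'n) \<Rightarrow> (complex ^ 'n) set \<Rightarrow> bool" where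
  "embedding_map f V \<longleftrightarrow>
     DA_variety V \<and>
     (\<forall>i. (\<lambda>z. f z $ i) holomorphic_on ball 0 1) \<and>
     inj_on f (ball 0 1) \<and>
     (\<forall>z\<in>ball 0 1. \<exists>i. deriv (\<lambda>z. f z $ i) z \<noteq> 0) \<and>
     V = f ` ball 0 1 \<and>
     (\<exists>U g. open U \<and> cball 0 1 \<subseteq> U \<and> C2_on U g \<and> (\<forall>x\<in>cball 0 1. g x = f x)) \<and>
     (\<forall>x\<in>cball 0 1. norm (f x) = 1 \<longleftrightarrow> cmod x = 1)"

definition analytic_disc_attached :: "(complex ^ 'n) set \<Rightarrow> bool" where
  "analytic_disc_attached V \<longleftrightarrow> (\<exists>f. embedding_map f V)"

definition kf :: "(complex \<Rightarrow> complex ^ 'n) \<Rightarrow> complex \<Rightarrow> complex \<Rightarrow> complex" where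
  "kf f z w = 1 / (1 - cinner (f z) (f w))"

end

(* For h in H_f, h(r) - h(q) is the inner product of h with k_r - k_q, so it suffices to let
   r -> 1 and q -> -1 along the radii in such a way that k_r - k_q stays bounded in H_f; since
   f(r) and f(q) both tend to f(1) = f(-1), the differences k_r - k_q tend to 0 weakly, hence
   h(r) - h(q) -> 0.
   Near a boundary point z one has f((1 - t) z) = f(z) - t w + O(t^2), where <w, f(z)> is real,
   because f is holomorphic and |f| = 1 on the circle, and positive, by a Hopf-type bound coming
   from Schwarz-Pick.  Choosing the parameters t at 1 and at -1 such that both values t <w, f(z)>
   equal the same l, all four numbers 1 - <f(x), f(y)> with x, y in {r, q} are 2 l + O(l^2), so
   the squared norm of k_r - k_q, a signed sum of their reciprocals, stays bounded. *)

theory Submission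
  imports Defs
begin

lemma cnj_cinner: "cnj (cinner x y) = cinner y x"
  unfolding cinner_def by (simp add: mult.commute)

lemma cinner_add_left: "cinner (x + y) z = cinner x z + cinner y z"
  unfolding cinner_def by (simp add: distrib_right sum.distrib)

lemma cinner_add_right: "cinner z (x + y) = cinner z x + cinner z y"
  unfolding cinner_def by (simp add: distrib_left sum.distrib)

lemma cinner_diff_left: "cinner (x - y) z = cinner x z - cinner y z"
  unfolding cinner_def by (simp add: algebra_simps sum_subtractf)

lemma cinner_diff_right: "cinner z (x - y) = cinner z x - cinner z y"
  unfolding cinner_def by (simp add: algebra_simps sum_subtractf)

lemma cinner_scaleR_left: "cinner (c *\<^sub>R x) z = of_real c * cinner x z"
  unfolding cinner_def vector_scaleR_component
  by (simp add: sum_distrib_left scaleR_conv_of_real mult.assoc)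

lemma cinner_scaleR_right: "cinner z (c *\<^sub>R x) = of_real c * cinner z x"
  unfolding cinner_def vector_scaleR_component
  by (simp add: sum_distrib_left scaleR_conv_of_real algebra_simps)

lemma cinner_self: "cinner x x = of_real (norm x ^ 2)"
proof -
  have norm_sq: "norm x ^ 2 = (\<Sum>i\<in>UNIV. cmod (x $ i) ^ 2)"
    unfolding norm_vec_def L2_set_def by (simp add: sum_nonneg)
  show ?thesis
    unfolding cinner_def norm_sq of_real_sum
    by (intro sum.cong) (simp_all add: complex_norm_square[symmetric])
qed

lemma Re_cinner: "Re (cinner x y) = inner x y"
  unfolding cinner_def inner_vec_def by (simp add: inner_complex_def Re_sum)

lemma norm_cinner_le: "cmod (cinner x y) \<le> norm x * norm y"
proof -
  have "cmod (cinner x y) \<le> (\<Sum>i\<in>UNIV. cmod (x $ i * cnj (y $ i)))"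
    unfolding cinner_def by (rule norm_sum)
  also have "\<dots> = (\<Sum>i\<in>UNIV. \<bar>cmod (x $ i)\<bar> * \<bar>cmod (y $ i)\<bar>)"
    by (simp add: norm_mult)
  also have "\<dots> \<le> L2_set (\<lambda>i. cmod (x $ i)) UNIV * L2_set (\<lambda>i. cmod (y $ i)) UNIV"
    by (rule L2_set_mult_ineq)
  finally show ?thesis by (simp add: norm_vec_def)
qed

lemma norm_cinner_less_one:
  assumes "norm x < 1" and "norm y \<le> 1"
  shows "cmod (cinner x y) < 1"
proof -
  have "norm x * norm y \<le> norm x"
    using assms(2) by (simp add: mult_left_le)
  then show ?thesis
    using norm_cinner_le[of x y] assms(1) by linarith
qed

section \<open>Finite combinations of kernel functions\<close>

definition lcinner ::
    "('a \<Rightarrow> 'a \<Rightarrow> complex) \<Rightarrow> (complex \<times> 'a) list \<Rightarrow> (complex \<times> 'a) list \<Rightarrow> complex"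
  where "lcinner K cs ds = (\<Sum>(a, w)\<leftarrow>cs. \<Sum>(b, v)\<leftarrow>ds. a * cnj b * K v w)"

definition lcscale :: "complex \<Rightarrow> (complex \<times> 'a) list \<Rightarrow> (complex \<times> 'a) list"
  where "lcscale \<mu> cs = map (\<lambda>(b, v). (\<mu> * b, v)) cs"

lemma snd_set_lcscale [simp]: "snd ` set (lcscale \<mu> cs) = snd ` set cs"
  unfolding lcscale_def by (induction cs) auto

lemma lcnorm2_eq_Re_lcinner: "lcnorm2 K cs = Re (lcinner K cs cs)"
  unfolding lcnorm2_def lcinner_def ..

lemma lcinner_conv_nth:
  "lcinner K cs ds = (\<Sum>i<length cs. \<Sum>j<length ds.
     fst (cs ! i) * cnj (fst (ds ! j)) * K (snd (ds ! j)) (snd (cs ! i)))"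
  unfolding lcinner_def by (simp add: sum_list_sum_nth atLeast0LessThan case_prod_unfold)

lemma lcinner_append_left: "lcinner K (cs @ cs') ds = lcinner K cs ds + lcinner K cs' ds"
  unfolding lcinner_def by simp

lemma lcinner_append_right: "lcinner K cs (ds @ ds') = lcinner K cs ds + lcinner K cs ds'"
  unfolding lcinner_def by (simp add: case_prod_unfold sum_list_addf)

lemma lcinner_lcscale_left: "lcinner K (lcscale \<mu> cs) ds = \<mu> * lcinner K cs ds"
  unfolding lcinner_conv_nth lcscale_def by (simp add: case_prod_unfold sum_distrib_left mult.assoc)

lemma lcinner_lcscale_right: "lcinner K cs (lcscale \<mu> ds) = cnj \<mu> * lcinner K cs ds"
  unfolding lcinner_conv_nth lcscale_def by (simp add: case_prod_unfold sum_distrib_left algebra_simps)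

lemma cnj_lcinner:
  assumes "\<And>v w. K v w = cnj (K w v)"
  shows "cnj (lcinner K cs ds) = lcinner K ds cs"
  unfolding lcinner_conv_nth
  by (subst sum.swap) (simp add: assms[of "snd (cs ! _)"] mult.commute mult.left_commute)

lemma lincomb_conv_lcinner: "lincomb K cs z = lcinner K cs [(1, z)]"
  unfolding lincomb_def lcinner_def by (simp add: case_prod_unfold)

lemma lcdiff_conv_lcscale: "lcdiff cs ds = cs @ lcscale (-1) ds"
  unfolding lcdiff_def lcscale_def by simp

lemma lincomb_lcdiff: "lincomb K (lcdiff cs ds) z = lincomb K cs z - lincomb K ds z"
  unfolding lincomb_conv_lcinner lcdiff_conv_lcscale lcinner_append_left lcinner_lcscale_left
  by simp

lemma lcinner_point_diff: "lcinner K cs [(1, x), (-1, y)] = lincomb K cs x - lincomb K cs y"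
  unfolding lcinner_def lincomb_def by (simp add: case_prod_unfold sum_list_subtractf)

lemma lcinner_Cauchy_Schwarz:
  assumes herm: "\<And>v w. K v w = cnj (K w v)"
    and psd: "\<And>cs. snd ` set cs \<subseteq> X \<Longrightarrow> 0 \<le> lcnorm2 K cs"
    and X: "snd ` set cs \<subseteq> X" "snd ` set ds \<subseteq> X"
  shows "cmod (lcinner K cs ds) ^ 2 \<le> lcnorm2 K cs * lcnorm2 K ds"
proof -
  define B where "B = lcinner K cs ds"
  (* Expanding 0 <= |cs + mu ds|^2 with mu = -B/N needs N > 0, so take any N above
     lcnorm2 K ds first and let N decrease to it afterwards. *)
  have "cmod B ^ 2 \<le> lcnorm2 K cs * N" if N: "lcnorm2 K ds < N" for N
  proof -
    have N0: "0 < N" using psd[OF X(2)] N by linarith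
    define \<mu> where "\<mu> = - of_real (1 / N) * B"
    have B2: "B * cnj B = of_real (cmod B ^ 2)"
      by (metis complex_norm_square of_real_power)
    have "cnj \<mu> * B = - of_real (cmod B ^ 2 / N)" "\<mu> * cnj B = - of_real (cmod B ^ 2 / N)"
      "\<mu> * cnj \<mu> = of_real (cmod B ^ 2 / N ^ 2)"
      unfolding \<mu>_def by (simp_all add: B2 mult.commute mult.left_commute power2_eq_square)
    moreover have "lcinner K ds cs = cnj B"
      unfolding B_def by (rule cnj_lcinner[OF herm, symmetric])
    then have "lcinner K (cs @ lcscale \<mu> ds) (cs @ lcscale \<mu> ds)
        = lcinner K cs cs + cnj \<mu> * B + \<mu> * cnj B + (\<mu> * cnj \<mu>) * lcinner K ds ds"
      unfolding lcinner_append_left lcinner_append_right lcinner_lcscale_left lcinner_lcscale_right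
        B_def[symmetric]
      by (simp add: algebra_simps)
    ultimately have "lcinner K (cs @ lcscale \<mu> ds) (cs @ lcscale \<mu> ds)
        = lcinner K cs cs - 2 * of_real (cmod B ^ 2 / N)
          + of_real (cmod B ^ 2 / N ^ 2) * lcinner K ds ds"
      by simp
    then have "lcnorm2 K (cs @ lcscale \<mu> ds)
        = lcnorm2 K cs - 2 * (cmod B ^ 2 / N) + cmod B ^ 2 / N ^ 2 * lcnorm2 K ds"
      unfolding lcnorm2_eq_Re_lcinner by simp
    also have "\<dots> \<le> lcnorm2 K cs - cmod B ^ 2 / N"
      using mult_left_mono[OF less_imp_le[OF N], of "cmod B ^ 2 / N ^ 2"] N0
      by (simp add: power2_eq_square)
    finally have "0 \<le> lcnorm2 K cs - cmod B ^ 2 / N"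
      using psd[of "cs @ lcscale \<mu> ds"] X by (simp add: image_Un)
    then show ?thesis using N0 by (simp add: field_simps)
  qed
  then have "\<forall>\<^sub>F N in at_right (lcnorm2 K ds). cmod B ^ 2 \<le> lcnorm2 K cs * N"
    using eventually_at_right_less by (rule eventually_mono[rotated])
  moreover have "((\<lambda>N. lcnorm2 K cs * N) \<longlongrightarrow> lcnorm2 K cs * lcnorm2 K ds) (at_right (lcnorm2 K ds))"
    by (intro tendsto_intros)
  ultimately show ?thesis
    unfolding B_def by (intro tendsto_lowerbound) auto
qed

lemma in_rkhs_diff_approx:
  assumes herm: "\<And>v w. K v w = cnj (K w v)"
    and psd: "\<And>cs. snd ` set cs \<subseteq> X \<Longrightarrow> 0 \<le> lcnorm2 K cs"
    and h: "in_rkhs X K h" and "0 < e"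
  obtains cs where "snd ` set cs \<subseteq> X"
    and "\<And>x y. x \<in> X \<Longrightarrow> y \<in> X \<Longrightarrow>
      cmod (h x - h y - (lincomb K cs x - lincomb K cs y)) ^ 2 \<le> e * lcnorm2 K [(1, x), (-1, y)]"
proof -
  obtain s where s_in: "\<And>n. snd ` set (s n) \<subseteq> X"
    and cauchy: "\<And>e. 0 < e \<Longrightarrow> \<exists>N. \<forall>m\<ge>N. \<forall>n\<ge>N. lcnorm2 K (lcdiff (s m) (s n)) < e"
    and conv: "\<And>z. z \<in> X \<Longrightarrow> (\<lambda>n. lincomb K (s n) z) \<longlonglongrightarrow> h z"
    using h unfolding in_rkhs_def by blast
  obtain N where N: "\<And>m n. N \<le> m \<Longrightarrow> N \<le> n \<Longrightarrow> lcnorm2 K (lcdiff (s m) (s n)) < e"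
    using cauchy[OF \<open>0 < e\<close>] by blast
  show thesis
  proof (rule that[OF s_in])
    fix x y assume xy: "x \<in> X" "y \<in> X"
    let ?\<phi> = "[(1, x), (-1, y)]"
    let ?\<Delta> = "\<lambda>cs. lincomb K cs x - lincomb K cs y"
    have bound: "cmod (?\<Delta> (s n) - ?\<Delta> (s N)) ^ 2 \<le> e * lcnorm2 K ?\<phi>" if "N \<le> n" for n
    proof -
      have "?\<Delta> (s n) - ?\<Delta> (s N) = lcinner K (lcdiff (s n) (s N)) ?\<phi>"
        by (simp add: lcinner_point_diff lincomb_lcdiff)
      moreover have "snd ` set (lcdiff (s n) (s N)) \<subseteq> X"
        using s_in by (simp add: lcdiff_conv_lcscale image_Un)
      ultimately have "cmod (?\<Delta> (s n) - ?\<Delta> (s N)) ^ 2 \<le> lcnorm2 K (lcdiff (s n) (s N)) * lcnorm2 K ?\<phi>"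
        using lcinner_Cauchy_Schwarz[OF herm psd] xy by simp
      also have "\<dots> \<le> e * lcnorm2 K ?\<phi>"
        using N[OF that order.refl] psd[of ?\<phi>] xy by (intro mult_right_mono) auto
      finally show ?thesis .
    qed
    have "(\<lambda>n. cmod (?\<Delta> (s n) - ?\<Delta> (s N)) ^ 2) \<longlonglongrightarrow> cmod (h x - h y - ?\<Delta> (s N)) ^ 2"
      by (intro tendsto_intros conv xy)
    then show "cmod (h x - h y - ?\<Delta> (s N)) ^ 2 \<le> e * lcnorm2 K ?\<phi>"
      by (rule LIMSEQ_le_const2) (use bound in blast)
  qed
qed

lemma lincomb_diff_tendsto_zero:
  assumes "\<And>w. w \<in> snd ` set cs \<Longrightarrow> ((\<lambda>x. K (r x) w - K (q x) w) \<longlongrightarrow> 0) F"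
  shows "((\<lambda>x. lincomb K cs (r x) - lincomb K cs (q x)) \<longlongrightarrow> 0) F"
  using assms
proof (induction cs)
  case (Cons c cs)
  obtain a w where c: "c = (a, w)" by fastforce
  have "((\<lambda>x. K (r x) w - K (q x) w) \<longlongrightarrow> 0) F"
    using Cons.prems c by simp
  then have "((\<lambda>x. a * (K (r x) w - K (q x) w)) \<longlongrightarrow> 0) F"
    by (rule tendsto_mult_right_zero)
  moreover have "((\<lambda>x. lincomb K cs (r x) - lincomb K cs (q x)) \<longlongrightarrow> 0) F"
    using Cons by simp
  ultimately have "((\<lambda>x. a * (K (r x) w - K (q x) w) + (lincomb K cs (r x) - lincomb K cs (q x)))
      \<longlongrightarrow> 0) F"
    by (rule tendsto_add_zero)
  then show ?case
    unfolding lincomb_def c by (simp add: algebra_simps)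
qed (simp add: lincomb_def)

lemma in_rkhs_diff_tendsto_zero:
  assumes herm: "\<And>v w. K v w = cnj (K w v)"
    and psd: "\<And>cs. snd ` set cs \<subseteq> X \<Longrightarrow> 0 \<le> lcnorm2 K cs"
    and h: "in_rkhs X K h"
    and in_X: "\<forall>\<^sub>F x in F. r x \<in> X \<and> q x \<in> X"
    and bounded: "\<forall>\<^sub>F x in F. lcnorm2 K [(1, r x), (-1, q x)] \<le> B"
    and weak: "\<And>w. w \<in> X \<Longrightarrow> ((\<lambda>x. K (r x) w - K (q x) w) \<longlongrightarrow> 0) F"
  shows "((\<lambda>x. h (r x) - h (q x)) \<longlongrightarrow> 0) F"
proof (rule tendstoI)
  fix \<epsilon> :: real assume "0 < \<epsilon>"
  define e where "e = (\<epsilon> / 2) ^ 2 / (\<bar>B\<bar> + 1)"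
  have "0 < e" unfolding e_def using \<open>0 < \<epsilon>\<close> by simp
  obtain cs where cs: "snd ` set cs \<subseteq> X"
    and approx: "\<And>x y. x \<in> X \<Longrightarrow> y \<in> X \<Longrightarrow>
      cmod (h x - h y - (lincomb K cs x - lincomb K cs y)) ^ 2 \<le> e * lcnorm2 K [(1, x), (-1, y)]"
    using in_rkhs_diff_approx[OF herm psd h \<open>0 < e\<close>] by blast
  have "((\<lambda>x. lincomb K cs (r x) - lincomb K cs (q x)) \<longlongrightarrow> 0) F"
    using cs weak by (intro lincomb_diff_tendsto_zero) auto
  then have "\<forall>\<^sub>F x in F. cmod (lincomb K cs (r x) - lincomb K cs (q x)) < \<epsilon> / 2"
    using \<open>0 < \<epsilon>\<close> by (auto dest: tendstoD[where e = "\<epsilon> / 2"])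
  with in_X bounded show "\<forall>\<^sub>F x in F. dist (h (r x) - h (q x)) 0 < \<epsilon>"
  proof eventually_elim
    case (elim x)
    let ?\<Delta> = "lincomb K cs (r x) - lincomb K cs (q x)"
    have "cmod (h (r x) - h (q x) - ?\<Delta>) ^ 2 \<le> e * lcnorm2 K [(1, r x), (-1, q x)]"
      using elim by (intro approx) auto
    also have "\<dots> \<le> e * (\<bar>B\<bar> + 1)"
      using elim \<open>0 < e\<close> by (intro mult_left_mono) auto
    also have "\<dots> = (\<epsilon> / 2) ^ 2"
      unfolding e_def by (simp add: add_pos_nonneg)
    finally have "cmod (h (r x) - h (q x) - ?\<Delta>) \<le> \<epsilon> / 2"
      by (rule power2_le_imp_le) (use \<open>0 < \<epsilon>\<close> in simp)
    moreover have "cmod (h (r x) - h (q x)) \<le> cmod ?\<Delta> + cmod (h (r x) - h (q x) - ?\<Delta>)"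
      by (rule norm_triangle_sub)
    ultimately show ?case
      using elim by simp
  qed
qed

section \<open>Positivity of the Drury--Arveson kernel\<close>

lemma cinner_power:
  "cinner x y ^ k = (\<Sum>ms | length ms = k. (\<Prod>j\<leftarrow>ms. x $ j) * cnj (\<Prod>j\<leftarrow>ms. y $ j))"
proof (induction k)
  case (Suc k)
  let ?S = "\<lambda>k. {ms :: 'a list. length ms = k}"
  have inj: "inj_on (\<lambda>(ms, j). j # ms) (?S k \<times> UNIV)"
    by (auto simp: inj_on_def)
  have S_Suc: "?S (Suc k) = (\<lambda>(ms, j). j # ms) ` (?S k \<times> UNIV)"
    using lists_length_Suc_eq[where A = "UNIV :: 'a set" and n = k] by simp
  have "cinner x y ^ Suc k = cinner x y * (\<Sum>ms\<in>?S k. (\<Prod>j\<leftarrow>ms. x $ j) * cnj (\<Prod>j\<leftarrow>ms. y $ j))"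
    by (simp only: power_Suc Suc)
  also have "\<dots> = (\<Sum>j\<in>UNIV. \<Sum>ms\<in>?S k.
      x $ j * cnj (y $ j) * ((\<Prod>j\<leftarrow>ms. x $ j) * cnj (\<Prod>j\<leftarrow>ms. y $ j)))"
    unfolding cinner_def sum_product by (simp add: mult.assoc)
  also have "\<dots> = (\<Sum>(ms, j)\<in>?S k \<times> UNIV. (\<Prod>j\<leftarrow>j # ms. x $ j) * cnj (\<Prod>j\<leftarrow>j # ms. y $ j))"
    by (subst sum.swap) (simp add: sum.cartesian_product algebra_simps)
  also have "\<dots> = (\<Sum>ms\<in>?S (Suc k). (\<Prod>j\<leftarrow>ms. x $ j) * cnj (\<Prod>j\<leftarrow>ms. y $ j))"
    unfolding S_Suc by (subst sum.reindex[OF inj]) (simp add: case_prod_unfold)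
  finally show ?case .
qed simp

lemma lcnorm2_DA_kernel_nonneg:
  fixes cs :: "(complex \<times> (complex ^ 'n)) list"
  assumes "snd ` set cs \<subseteq> ball 0 1"
  shows "0 \<le> lcnorm2 DA_kernel cs"
proof -
  define n a x where "n = length cs" and "a i = fst (cs ! i)" and "x i = snd (cs ! i)" for i
  have x: "norm (x i) < 1" if "i < n" for i
    using assms that unfolding n_def x_def by (auto simp: image_subset_iff)
  let ?Q = "\<lambda>k. \<Sum>i<n. \<Sum>j<n. a i * cnj (a j) * cinner (x j) (x i) ^ k"
  have "?Q sums lcinner DA_kernel cs cs"
    unfolding lcinner_conv_nth DA_kernel_def n_def[symmetric] a_def[symmetric] x_def[symmetric]
  proof (intro sums_sum sums_mult)
    fix i j assume "i \<in> {..<n}" "j \<in> {..<n}"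
    then have "cmod (cinner (x j) (x i)) < 1"
      using x by (intro norm_cinner_less_one) (auto intro: less_imp_le)
    then show "(\<lambda>k. cinner (x j) (x i) ^ k) sums (1 / (1 - cinner (x j) (x i)))"
      by (rule geometric_sums)
  qed
  then have sums: "(\<lambda>k. Re (?Q k)) sums lcnorm2 DA_kernel cs"
    unfolding lcnorm2_eq_Re_lcinner by (rule sums_Re)
  have nonneg: "0 \<le> Re (?Q k)" for k
  proof -
    let ?S = "{ms. length ms = k}"
    let ?P = "\<lambda>y ms. \<Prod>j\<leftarrow>ms. (y :: complex ^ 'n) $ j"
    let ?Z = "\<lambda>ms. \<Sum>i<n. a i * cnj (?P (x i) ms)"
    have "?Q k = (\<Sum>i<n. \<Sum>j<n. \<Sum>ms\<in>?S. (a i * cnj (?P (x i) ms)) * cnj (a j * cnj (?P (x j) ms)))"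
      unfolding cinner_power by (simp add: sum_distrib_left algebra_simps)
    also have "\<dots> = (\<Sum>ms\<in>?S. ?Z ms * cnj (?Z ms))"
      by (simp add: sum_product) (subst sum.swap, rule sum.cong, simp, subst sum.swap, simp)
    finally have "Re (?Q k) = (\<Sum>ms\<in>?S. cmod (?Z ms) ^ 2)"
      by (simp add: complex_norm_square[symmetric] Re_sum del: cnj_sum)
    then show ?thesis by (simp add: sum_nonneg)
  qed
  show ?thesis
    by (rule sums_le[OF nonneg sums_zero sums])
qed

lemma lcnorm2_kf: "lcnorm2 (kf f) cs = lcnorm2 DA_kernel (map (\<lambda>(a, w). (a, f w)) cs)"
  unfolding lcnorm2_def kf_def DA_kernel_def by (simp add: case_prod_unfold o_def)

lemma kf_cnj: "kf f v w = cnj (kf f w v)"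
  unfolding kf_def by (simp add: cnj_cinner)

lemma lcnorm2_kf_nonneg:
  assumes "\<And>z. z \<in> ball 0 1 \<Longrightarrow> norm (f z) < 1" and "snd ` set cs \<subseteq> ball 0 1"
  shows "0 \<le> lcnorm2 (kf f) cs"
  unfolding lcnorm2_kf using assms
  by (intro lcnorm2_DA_kernel_nonneg) (force simp: case_prod_unfold)

lemma tendsto_DA_kernel_left:
  assumes "(X \<longlongrightarrow> x) F" and "cinner x y \<noteq> 1"
  shows "((\<lambda>t. DA_kernel (X t) y) \<longlongrightarrow> DA_kernel x y) F"
  unfolding DA_kernel_def cinner_def using assms
  by (intro tendsto_intros) (auto simp: cinner_def)

section \<open>Kernel estimates near a boundary point\<close>

lemma one_minus_cinner_perturbed:
  fixes p w1 w2 ea eb :: "complex ^ 'n"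
  assumes "cinner p p = 1"
  shows "1 - cinner (p - t1 *\<^sub>R w1 + ea) (p - t2 *\<^sub>R w2 + eb)
    = of_real t1 * cinner w1 p + of_real t2 * cinner p w2
      - (of_real (t1 * t2) * cinner w1 w2 + cinner (p - t1 *\<^sub>R w1) eb
         + cinner ea (p - t2 *\<^sub>R w2 + eb))"
  using assms
  by (simp add: cinner_add_left cinner_add_right cinner_diff_left cinner_diff_right
      cinner_scaleR_left cinner_scaleR_right algebra_simps)

lemma norm_one_minus_cinner_expansion:
  fixes p w1 w2 a b :: "complex ^ 'n"
  assumes p: "norm p = 1" and b: "norm b \<le> 1"
    and t: "0 \<le> t1" "t1 \<le> s" "0 \<le> t2" "t2 \<le> s" "s \<le> 1"
    and W: "norm w1 \<le> W" "norm w2 \<le> W"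
    and a_err: "norm (a - (p - t1 *\<^sub>R w1)) \<le> M * s\<^sup>2"
    and b_err: "norm (b - (p - t2 *\<^sub>R w2)) \<le> M * s\<^sup>2"
  shows "cmod (1 - cinner a b - (of_real t1 * cinner w1 p + of_real t2 * cinner p w2))
    \<le> s\<^sup>2 * (W\<^sup>2 + M * (2 + W))"
proof -
  define ea eb where "ea = a - (p - t1 *\<^sub>R w1)" and "eb = b - (p - t2 *\<^sub>R w2)"
  let ?u = "of_real (t1 * t2) * cinner w1 w2" and ?v = "cinner (p - t1 *\<^sub>R w1) eb"
  have "a = p - t1 *\<^sub>R w1 + ea" and "b = p - t2 *\<^sub>R w2 + eb"
    unfolding ea_def eb_def by simp_all
  moreover have "cinner p p = 1"
    using p by (simp add: cinner_self)
  ultimately have eq: "1 - cinner a b - (of_real t1 * cinner w1 p + of_real t2 * cinner p w2)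
      = - (?u + ?v + cinner ea b)"
    using one_minus_cinner_perturbed[of p t1 w1 ea t2 w2 eb] by simp
  have "cmod ?u \<le> (t1 * t2) * (norm w1 * norm w2)"
    using t by (simp add: norm_mult abs_mult mult_left_mono norm_cinner_le)
  also have "\<dots> \<le> (s * s) * (W * W)"
    using t W by (intro mult_mono) (auto intro: order_trans[OF norm_ge_zero])
  finally have u: "cmod ?u \<le> s\<^sup>2 * W\<^sup>2"
    by (simp add: power2_eq_square)
  have "norm (p - t1 *\<^sub>R w1) \<le> 1 + t1 * norm w1"
    using p t norm_triangle_ineq4[of p "t1 *\<^sub>R w1"] by simp
  also have "\<dots> \<le> 1 + W"
    using t W mult_mono[of t1 1 "norm w1" W] by simp
  finally have "norm (p - t1 *\<^sub>R w1) * norm eb \<le> (1 + W) * (M * s\<^sup>2)"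
    using b_err W by (intro mult_mono) (auto simp: eb_def intro: order_trans[OF norm_ge_zero])
  then have v: "cmod ?v \<le> (1 + W) * (M * s\<^sup>2)"
    using norm_cinner_le[of "p - t1 *\<^sub>R w1" eb] by linarith
  have "cmod (cinner ea b) \<le> M * s\<^sup>2"
    using norm_cinner_le[of ea b] a_err b mult_left_le[of "norm b" "norm ea"]
    unfolding ea_def[symmetric] by simp
  moreover have "s\<^sup>2 * W\<^sup>2 + (1 + W) * (M * s\<^sup>2) + M * s\<^sup>2 = s\<^sup>2 * (W\<^sup>2 + M * (2 + W))"
    by (simp add: algebra_simps)
  ultimately show ?thesis
    unfolding eq norm_minus_cancel
    using u v norm_triangle_ineq[of "?u + ?v" "cinner ea b"] norm_triangle_ineq[of ?u ?v]
    by linarith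
qed

lemma norm_divide_diff_le:
  fixes X c :: complex
  assumes "cmod (X - c) \<le> E" and "2 * E \<le> cmod c"
  shows "cmod (1 / X - 1 / c) \<le> 2 * E / cmod c ^ 2"
proof (cases "c = 0")
  case False
  have "cmod c - cmod X \<le> cmod (X - c)"
    using norm_triangle_ineq3[of c X] by (simp add: norm_minus_commute)
  then have X: "cmod c / 2 \<le> cmod X"
    using assms by linarith
  with False have X0: "X \<noteq> 0" by auto
  have "0 \<le> E"
    using assms(1) norm_ge_zero order_trans by blast
  have "1 / X - 1 / c = (c - X) / (X * c)"
    using X0 False by (simp add: diff_frac_eq)
  then have "cmod (1 / X - 1 / c) = cmod (X - c) / (cmod X * cmod c)"
    by (simp add: norm_divide norm_mult norm_minus_commute)
  also have "\<dots> \<le> E / (cmod c / 2 * cmod c)"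
    using assms X False \<open>0 \<le> E\<close> by (intro frac_le mult_right_mono) auto
  finally show ?thesis
    by (simp add: power2_eq_square mult.commute)
next
  case True
  then have "cmod X \<le> 0"
    using assms by (simp only: diff_zero norm_zero)
  with True show ?thesis
    by simp
qed

lemma norm_DA_kernel_sub_le:
  fixes p x y wx wy :: "complex ^ 'n"
  assumes p: "norm p = 1" and "norm y \<le> 1"
    and x: "norm (x - (p - tx *\<^sub>R wx)) \<le> M * s\<^sup>2" "cinner wx p = of_real \<alpha>x" "tx * \<alpha>x = l"
      "0 \<le> tx" "tx \<le> s" "norm wx \<le> W"
    and y: "norm (y - (p - ty *\<^sub>R wy)) \<le> M * s\<^sup>2" "cinner wy p = of_real \<alpha>y" "ty * \<alpha>y = l"
      "0 \<le> ty" "ty \<le> s" "norm wy \<le> W"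
    and s: "s \<le> 1" "0 < l" "s\<^sup>2 * (W\<^sup>2 + M * (2 + W)) \<le> l"
  shows "cmod (DA_kernel x y - 1 / of_real (2 * l)) \<le> s\<^sup>2 * (W\<^sup>2 + M * (2 + W)) / (2 * l\<^sup>2)"
proof -
  let ?E = "s\<^sup>2 * (W\<^sup>2 + M * (2 + W))"
  have "cmod (1 - cinner x y - (of_real tx * cinner wx p + of_real ty * cinner p wy)) \<le> ?E"
    using assms by (intro norm_one_minus_cinner_expansion) auto
  moreover have "cinner p wy = of_real \<alpha>y"
    using y(2) cnj_cinner[of wy p] by simp
  then have "of_real tx * cinner wx p + of_real ty * cinner p wy = of_real (2 * l)"
    using x y by (simp flip: of_real_mult of_real_add)
  ultimately have "cmod ((1 - cinner x y) - of_real (2 * l)) \<le> ?E"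
    by simp
  moreover have "2 * ?E \<le> cmod (of_real (2 * l) :: complex)"
    using s by simp
  ultimately have "cmod (1 / (1 - cinner x y) - 1 / of_real (2 * l))
      \<le> 2 * ?E / cmod (of_real (2 * l) :: complex) ^ 2"
    by (rule norm_divide_diff_le)
  also have "\<dots> = ?E / (2 * l\<^sup>2)"
    using s by (simp add: power2_eq_square)
  finally show ?thesis
    unfolding DA_kernel_def .
qed

text \<open>The four kernel values in the norm are all close to 1 / (2 l), so they nearly cancel.\<close>

lemma lcnorm2_DA_kernel_pair_le:
  fixes p w1 w2 a b :: "complex ^ 'n" and \<alpha>1 \<alpha>2 W M l :: real
  defines "\<sigma> \<equiv> 1 / \<alpha>1 + 1 / \<alpha>2" and "K \<equiv> W\<^sup>2 + M * (2 + W)"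
  assumes p: "norm p = 1"
    and w1: "cinner w1 p = of_real \<alpha>1" "0 < \<alpha>1" "norm w1 \<le> W"
    and w2: "cinner w2 p = of_real \<alpha>2" "0 < \<alpha>2" "norm w2 \<le> W"
    and l: "0 < l" "l * \<sigma> \<le> 1" "l * \<sigma>\<^sup>2 * K \<le> 1"
    and a: "norm a \<le> 1" "norm (a - (p - (l / \<alpha>1) *\<^sub>R w1)) \<le> M * (l * \<sigma>)\<^sup>2"
    and b: "norm b \<le> 1" "norm (b - (p - (l / \<alpha>2) *\<^sub>R w2)) \<le> M * (l * \<sigma>)\<^sup>2"
  shows "lcnorm2 DA_kernel [(1, a), (-1, b)] \<le> 2 * K * \<sigma>\<^sup>2"
proof -
  have "l / \<alpha>1 * \<alpha>1 = l" "0 \<le> l / \<alpha>1" "l / \<alpha>1 \<le> l * \<sigma>"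
    and "l / \<alpha>2 * \<alpha>2 = l" "0 \<le> l / \<alpha>2" "l / \<alpha>2 \<le> l * \<sigma>"
    unfolding \<sigma>_def using l w1 w2 by (simp_all add: field_simps)
  note A = a(2) w1(1) this(1-3) w1(3) and B = b(2) w2(1) this(4-6) w2(3)
  have "(l * \<sigma>)\<^sup>2 * K \<le> l"
    using mult_left_mono[OF l(3), of l] l(1) by (simp add: power2_eq_square algebra_simps)
  note small = l(2,1) this[unfolded K_def]
  let ?d = "\<lambda>x y. DA_kernel x y - 1 / of_real (2 * l)"
  let ?E = "(l * \<sigma>)\<^sup>2 * K / (2 * l\<^sup>2)"
  have "lcnorm2 DA_kernel [(1, a), (-1, b)] = Re (?d a a - ?d b a - ?d a b + ?d b b)"
    by (simp add: lcnorm2_def)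
  also have "\<dots> \<le> cmod (?d a a) + cmod (?d b a) + cmod (?d a b) + cmod (?d b b)"
    using complex_Re_le_cmod[of "?d a a - ?d b a - ?d a b + ?d b b"]
      norm_triangle_ineq[of "?d a a - ?d b a - ?d a b" "?d b b"]
      norm_triangle_ineq4[of "?d a a - ?d b a" "?d a b"] norm_triangle_ineq4[of "?d a a" "?d b a"]
    by linarith
  also have "\<dots> \<le> 4 * ?E"
    using norm_DA_kernel_sub_le[OF p a(1) A A small] norm_DA_kernel_sub_le[OF p a(1) B A small]
      norm_DA_kernel_sub_le[OF p b(1) A B small] norm_DA_kernel_sub_le[OF p b(1) B B small]
    unfolding K_def by linarith
  also have "\<dots> = 2 * K * \<sigma>\<^sup>2"
    using l(1) by (simp add: power2_eq_square)
  finally show ?thesis .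
qed

lemma C2_onE:
  fixes g :: "complex \<Rightarrow> 'b::real_normed_vector"
  assumes "C2_on U g" and "open U"
  obtains D where "\<And>x. x \<in> U \<Longrightarrow> (g has_derivative D x) (at x)"
    and "\<And>v x. x \<in> U \<Longrightarrow> (\<lambda>y. D y v) differentiable (at x)"
proof -
  obtain D where gD: "\<And>x. x \<in> U \<Longrightarrow> (g has_derivative D x) (at x)"
    and C1: "C1_on U (\<lambda>x. D x 1)" "C1_on U (\<lambda>x. D x \<i>)"
    using assms(1) unfolding C2_on_def by blast
  obtain D1 where D1: "\<And>x. x \<in> U \<Longrightarrow> ((\<lambda>y. D y 1) has_derivative D1 x) (at x)"
    using C1(1) unfolding C1_on_def by blast
  obtain Di where Di: "\<And>x. x \<in> U \<Longrightarrow> ((\<lambda>y. D y \<i>) has_derivative Di x) (at x)"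
    using C1(2) unfolding C1_on_def by blast
  have "(\<lambda>y. D y v) differentiable (at x)" if "x \<in> U" for v x
  proof -
    have v: "Re v *\<^sub>R 1 + Im v *\<^sub>R \<i> = v"
      by (simp add: complex_eq_iff)
    have "((\<lambda>y. Re v *\<^sub>R D y 1 + Im v *\<^sub>R D y \<i>) has_derivative
        (\<lambda>h. Re v *\<^sub>R D1 x h + Im v *\<^sub>R Di x h)) (at x)"
      using that by (intro derivative_intros D1 Di)
    then have "((\<lambda>y. D y v) has_derivative (\<lambda>h. Re v *\<^sub>R D1 x h + Im v *\<^sub>R Di x h)) (at x)"
    proof (rule has_derivative_transform_within_open[OF _ assms(2) that])
      fix y assume "y \<in> U"
      note lin = linear_simps[OF has_derivative_bounded_linear[OF gD[OF this]]]
      show "Re v *\<^sub>R D y 1 + Im v *\<^sub>R D y \<i> = D y v"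
        unfolding lin(5)[symmetric] lin(1)[symmetric] v ..
    qed
    then show ?thesis
      unfolding differentiable_def by blast
  qed
  with gD show thesis
    by (rule that)
qed

lemma has_derivative_Lipschitz_at:
  assumes "(F has_derivative F') (at x0)"
  obtains C d where "0 \<le> C" and "0 < d"
    and "\<And>y. norm (y - x0) < d \<Longrightarrow> norm (F y - F x0) \<le> C * norm (y - x0)"
proof -
  obtain d where bl: "bounded_linear F'" and "0 < d"
    and d: "\<And>y. norm (y - x0) < d \<Longrightarrow> norm (F y - F x0 - F' (y - x0)) \<le> 1 * norm (y - x0)"
    using assms unfolding has_derivative_at_alt by (meson zero_less_one)
  obtain K where "0 < K" and K: "\<And>x. norm (F' x) \<le> norm x * K"
    using bounded_linear.pos_bounded[OF bl] by blast
  show thesis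
  proof (rule that[of "1 + K" d])
    fix y assume "norm (y - x0) < d"
    then show "norm (F y - F x0) \<le> (1 + K) * norm (y - x0)"
      using d[OF \<open>norm (y - x0) < d\<close>] K[of "y - x0"] norm_triangle_sub[of "F y - F x0" "F' (y - x0)"]
      by (simp add: algebra_simps)
  qed (use \<open>0 < K\<close> \<open>0 < d\<close> in auto)
qed

lemma norm_remainder_le_on_segment:
  fixes g :: "'a::real_normed_vector \<Rightarrow> 'b::real_normed_vector"
  assumes gD: "\<And>\<sigma>. \<bar>\<sigma>\<bar> \<le> \<bar>t\<bar> \<Longrightarrow> (g has_derivative D (x0 + \<sigma> *\<^sub>R v)) (at (x0 + \<sigma> *\<^sub>R v))"
    and Dv: "\<And>\<sigma>. \<bar>\<sigma>\<bar> \<le> \<bar>t\<bar> \<Longrightarrow> norm (D (x0 + \<sigma> *\<^sub>R v) v - D x0 v) \<le> L * \<bar>t\<bar>"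
  shows "norm (g (x0 + t *\<^sub>R v) - g x0 - t *\<^sub>R D x0 v) \<le> L * t\<^sup>2"
proof -
  let ?S = "cball (0::real) \<bar>t\<bar>"
  have "norm (g (x0 + t *\<^sub>R v) - g (x0 + 0 *\<^sub>R v) - (\<lambda>h. h *\<^sub>R D (x0 + 0 *\<^sub>R v) v) (t - 0))
      \<le> norm (t - 0) * (L * \<bar>t\<bar>)"
  proof (rule differentiable_bound_linearization[where S = ?S and f = "\<lambda>\<sigma>. g (x0 + \<sigma> *\<^sub>R v)"])
    fix \<sigma> assume "\<sigma> \<in> ?S"
    then have gD\<sigma>: "(g has_derivative D (x0 + \<sigma> *\<^sub>R v)) (at (x0 + \<sigma> *\<^sub>R v))"
      by (intro gD) simp
    have "((\<lambda>\<sigma>. x0 + \<sigma> *\<^sub>R v) has_derivative (\<lambda>h. h *\<^sub>R v)) (at \<sigma> within ?S)"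
      by (auto intro!: derivative_eq_intros)
    from has_derivative_compose[OF this has_derivative_at_withinI[OF gD\<sigma>]]
    show "((\<lambda>\<sigma>. g (x0 + \<sigma> *\<^sub>R v)) has_derivative (\<lambda>h. h *\<^sub>R D (x0 + \<sigma> *\<^sub>R v) v)) (at \<sigma> within ?S)"
      using linear_simps(5)[OF has_derivative_bounded_linear[OF gD\<sigma>]] by (simp add: o_def)
  next
    fix \<sigma> assume "\<sigma> \<in> ?S"
    have "onorm ((\<lambda>h. h *\<^sub>R D (x0 + \<sigma> *\<^sub>R v) v) - (\<lambda>h. h *\<^sub>R D (x0 + 0 *\<^sub>R v) v))
        = onorm (\<lambda>h::real. h *\<^sub>R (D (x0 + \<sigma> *\<^sub>R v) v - D x0 v))"
      by (simp add: fun_diff_def scaleR_diff_right)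
    also have "\<dots> = norm (D (x0 + \<sigma> *\<^sub>R v) v - D x0 v)"
      using onorm_scaleR_left[OF bounded_linear_ident] by (simp add: onorm_id)
    finally show "onorm ((\<lambda>h. h *\<^sub>R D (x0 + \<sigma> *\<^sub>R v) v) - (\<lambda>h. h *\<^sub>R D (x0 + 0 *\<^sub>R v) v))
        \<le> L * \<bar>t\<bar>"
      using Dv \<open>\<sigma> \<in> ?S\<close> by simp
  qed (auto simp: abs_mult intro!: mult_left_le_one_le)
  then show ?thesis
    by (simp add: power2_eq_square abs_mult algebra_simps)
qed

lemma has_derivative_quadratic_remainder:
  fixes g :: "'a::real_normed_vector \<Rightarrow> 'b::real_normed_vector"
  assumes U: "open U" "x0 \<in> U" and gD: "\<And>x. x \<in> U \<Longrightarrow> (g has_derivative D x) (at x)"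
    and Dv: "(\<lambda>x. D x v) differentiable (at x0)"
  shows "\<exists>M. \<forall>\<^sub>F t in at 0. norm (g (x0 + t *\<^sub>R v) - g x0 - t *\<^sub>R D x0 v) \<le> M * t\<^sup>2"
proof -
  obtain C d where "0 \<le> C" "0 < d"
    and lip: "\<And>y. norm (y - x0) < d \<Longrightarrow> norm (D y v - D x0 v) \<le> C * norm (y - x0)"
    using Dv has_derivative_Lipschitz_at unfolding differentiable_def by metis
  obtain e where "0 < e" "ball x0 e \<subseteq> U"
    using U open_contains_ball by blast
  define \<delta> where "\<delta> = min d e / (norm v + 1)"
  have v1: "0 < norm v + 1"
    by (simp add: add_nonneg_pos)
  have "norm (g (x0 + t *\<^sub>R v) - g x0 - t *\<^sub>R D x0 v) \<le> (C * norm v) * t\<^sup>2" if t: "\<bar>t\<bar> < \<delta>" for t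
  proof (rule norm_remainder_le_on_segment)
    fix \<sigma> :: real assume "\<bar>\<sigma>\<bar> \<le> \<bar>t\<bar>"
    have "\<bar>\<sigma>\<bar> * norm v \<le> \<bar>\<sigma>\<bar> * (norm v + 1)"
      by (simp add: mult_left_mono)
    also have "\<dots> < \<delta> * (norm v + 1)"
      using \<open>\<bar>\<sigma>\<bar> \<le> \<bar>t\<bar>\<close> t v1 by (intro mult_strict_right_mono) auto
    finally have close: "norm ((x0 + \<sigma> *\<^sub>R v) - x0) < min d e"
      unfolding \<delta>_def using v1 by simp
    then show "(g has_derivative D (x0 + \<sigma> *\<^sub>R v)) (at (x0 + \<sigma> *\<^sub>R v))"
      using \<open>ball x0 e \<subseteq> U\<close> by (intro gD) (auto simp: dist_norm norm_minus_commute)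
    have "norm (D (x0 + \<sigma> *\<^sub>R v) v - D x0 v) \<le> C * (\<bar>\<sigma>\<bar> * norm v)"
      using lip[of "x0 + \<sigma> *\<^sub>R v"] close by simp
    also have "\<dots> \<le> C * (\<bar>t\<bar> * norm v)"
      using \<open>\<bar>\<sigma>\<bar> \<le> \<bar>t\<bar>\<close> \<open>0 \<le> C\<close> by (intro mult_left_mono mult_right_mono) auto
    finally show "norm (D (x0 + \<sigma> *\<^sub>R v) v - D x0 v) \<le> C * norm v * \<bar>t\<bar>"
      by (simp add: mult_ac)
  qed
  moreover have "0 < \<delta>"
    using \<open>0 < d\<close> \<open>0 < e\<close> v1 by (simp add: \<delta>_def)
  ultimately have "\<forall>\<^sub>F t in at 0. norm (g (x0 + t *\<^sub>R v) - g x0 - t *\<^sub>R D x0 v) \<le> (C * norm v) * t\<^sup>2"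
    unfolding eventually_at by (auto simp: dist_norm)
  then show ?thesis ..
qed

lemma has_derivative_complex_linear_on_closure:
  fixes g :: "complex \<Rightarrow> complex ^ 'n" and D :: "complex \<Rightarrow> complex \<Rightarrow> complex ^ 'n"
  assumes "open S" and gD: "\<And>x. x \<in> closure S \<Longrightarrow> (g has_derivative D x) (at x)"
    and cont: "\<And>h. continuous_on (closure S) (\<lambda>x. D x h)"
    and hol: "\<And>j. (\<lambda>z. g z $ j) holomorphic_on S"
    and x0: "x0 \<in> closure S"
  shows "D x0 h $ j = h * D x0 1 $ j"
proof -
  have "(\<lambda>x. D x h $ j - h * D x 1 $ j) x0 = 0"
  proof (rule continuous_constant_on_closure[OF _ _ x0])
    show "continuous_on (closure S) (\<lambda>x. D x h $ j - h * D x 1 $ j)"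
      by (intro continuous_intros cont)
  next
    fix x assume "x \<in> S"
    then have "((\<lambda>z. g z $ j) has_derivative (\<lambda>h. deriv (\<lambda>z. g z $ j) x * h)) (at x)"
      using holomorphic_derivI[OF hol \<open>open S\<close>] by (simp add: has_field_derivative_def)
    moreover have "((\<lambda>z. g z $ j) has_derivative (\<lambda>h. D x h $ j)) (at x)"
      using \<open>x \<in> S\<close> closure_subset
      by (intro bounded_linear.has_derivative[OF bounded_linear_vec_nth gD]) auto
    ultimately have "D x h $ j = deriv (\<lambda>z. g z $ j) x * h" for h
      using has_derivative_unique by metis
    then show "D x h $ j - h * D x 1 $ j = 0"
      by simp
  qed
  then show ?thesis
    by simp
qed

lemma has_derivative_orthogonal_circle:
  fixes g :: "complex \<Rightarrow> 'a::real_inner"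
  assumes gD: "(g has_derivative D) (at \<zeta>)" and circle: "\<And>\<theta>. norm (g (\<zeta> * cis \<theta>)) = c"
  shows "inner (D (\<zeta> * \<i>)) (g \<zeta>) = 0"
proof -
  have "((\<lambda>\<theta>. \<zeta> * cis \<theta>) has_derivative (\<lambda>h. h *\<^sub>R (\<zeta> * \<i>))) (at 0)"
    using has_derivative_mult_right[OF has_derivative_cis[OF has_derivative_ident], of \<zeta> 0]
    by (simp add: scaleR_conv_of_real mult.commute mult.left_commute)
  moreover have "(g has_derivative D) (at (\<zeta> * cis 0))"
    using gD by simp
  ultimately
  have gc: "((\<lambda>\<theta>. g (\<zeta> * cis \<theta>)) has_derivative (\<lambda>h. D (h *\<^sub>R (\<zeta> * \<i>)))) (at 0)"
    by (rule has_derivative_compose)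
  have "((\<lambda>\<theta>. inner (g (\<zeta> * cis \<theta>)) (g (\<zeta> * cis \<theta>))) has_derivative
      (\<lambda>h. inner (g \<zeta>) (D (h *\<^sub>R (\<zeta> * \<i>))) + inner (D (h *\<^sub>R (\<zeta> * \<i>))) (g \<zeta>))) (at 0)"
    using has_derivative_inner[OF gc gc] by simp
  moreover have "(\<lambda>\<theta>. inner (g (\<zeta> * cis \<theta>)) (g (\<zeta> * cis \<theta>))) = (\<lambda>_. c\<^sup>2)"
    using circle by (simp add: power2_norm_eq_inner[symmetric])
  ultimately have "(\<lambda>h. inner (g \<zeta>) (D (h *\<^sub>R (\<zeta> * \<i>))) + inner (D (h *\<^sub>R (\<zeta> * \<i>))) (g \<zeta>)) = (\<lambda>_. 0)"
    using has_derivative_unique[OF _ has_derivative_const] by metis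
  from fun_cong[OF this, of 1] show ?thesis
    by (simp add: inner_commute)
qed

lemma Schwarz_Pick_estimate_real:
  fixes A Z W Dn Nm :: real
  assumes A: "0 \<le> A" "A < 1" and Z: "0 \<le> Z" "Z < 1"
    and Dn: "1 - A \<le> Dn" and Nm: "0 \<le> Nm" "Nm \<le> Z * Dn"
    and id: "Dn\<^sup>2 - Nm\<^sup>2 = (1 - A\<^sup>2) * (1 - W\<^sup>2)"
  shows "(1 - Z) * ((1 - A) / (1 + A)) \<le> 1 - W\<^sup>2"
proof -
  have "Nm\<^sup>2 \<le> Z\<^sup>2 * Dn\<^sup>2"
    using Nm by (metis power_mono power_mult_distrib)
  then have "(1 - Z\<^sup>2) * Dn\<^sup>2 \<le> (1 - A\<^sup>2) * (1 - W\<^sup>2)"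
    using id by (simp add: algebra_simps)
  moreover have "(1 - Z\<^sup>2) * (1 - A)\<^sup>2 \<le> (1 - Z\<^sup>2) * Dn\<^sup>2"
    using Dn A Z by (intro mult_left_mono power_mono) (auto simp: power_le_one abs_square_le_1)
  ultimately have "((1 - Z\<^sup>2) * (1 - A)) * (1 - A) \<le> ((1 + A) * (1 - W\<^sup>2)) * (1 - A)"
    by (simp add: power2_eq_square algebra_simps)
  then have "(1 - Z\<^sup>2) * (1 - A) \<le> (1 + A) * (1 - W\<^sup>2)"
    using A by (simp add: mult_le_cancel_right)
  moreover have "(1 - Z) * (1 - A) \<le> (1 - Z\<^sup>2) * (1 - A)"
    using A Z by (intro mult_right_mono) (auto simp: power2_eq_square intro: mult_left_le_one_le)
  ultimately have "(1 - Z) * (1 - A) \<le> (1 + A) * (1 - W\<^sup>2)"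
    by linarith
  then show ?thesis
    using A by (simp add: divide_le_eq mult.commute)
qed

lemma Schwarz_Pick_boundary_bound:
  fixes \<phi> :: "complex \<Rightarrow> complex"
  assumes hol: "\<phi> holomorphic_on ball 0 1" and lt1: "\<And>z. norm z < 1 \<Longrightarrow> norm (\<phi> z) < 1"
    and z: "norm z < 1"
  shows "(1 - norm z) * ((1 - norm (\<phi> 0)) / (1 + norm (\<phi> 0))) \<le> 1 - norm (\<phi> z) ^ 2"
proof -
  define a where "a = \<phi> 0"
  have a1: "cmod a < 1"
    unfolding a_def using lt1[of 0] by simp
  define \<psi> where "\<psi> = Moebius_function 0 a \<circ> \<phi>"
  have "\<psi> holomorphic_on ball 0 1"
    unfolding \<psi>_def using lt1
    by (intro holomorphic_on_compose_gen[OF hol Moebius_function_holomorphic[OF a1]]) auto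
  moreover have "\<psi> 0 = 0"
    unfolding \<psi>_def a_def by (simp add: Moebius_function_eq_zero)
  moreover have "norm (\<psi> w) < 1" if "norm w < 1" for w
    unfolding \<psi>_def using Moebius_function_norm_lt_1[OF a1 lt1[OF that]] by simp
  ultimately have schwarz: "cmod (\<psi> z) \<le> cmod z"
    using Schwarz_Lemma(1) z by blast
  have "cmod (cnj a * \<phi> z) \<le> cmod a"
    using lt1[OF z] by (simp add: norm_mult mult_right_le_one_le)
  then have den: "1 - cmod a \<le> cmod (1 - cnj a * \<phi> z)"
    using norm_triangle_ineq2[of 1 "cnj a * \<phi> z"] by simp
  with a1 have "cnj a * \<phi> z \<noteq> 1"
    by auto
  then have "cmod (\<phi> z - a) \<le> cmod z * cmod (1 - cnj a * \<phi> z)"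
    using schwarz by (simp add: \<psi>_def Moebius_function_simple norm_divide divide_le_eq)
  moreover have "cmod (1 - cnj a * \<phi> z) ^ 2 - cmod (\<phi> z - a) ^ 2
      = (1 - cmod a ^ 2) * (1 - cmod (\<phi> z) ^ 2)"
    unfolding cmod_power2 by (simp add: power2_eq_square algebra_simps)
  ultimately show ?thesis
    using a1 z den by (intro Schwarz_Pick_estimate_real) (simp_all add: a_def)
qed

section \<open>Radial expansions at the boundary\<close>

definition radial_expansion :: "(complex \<Rightarrow> 'a::real_normed_vector) \<Rightarrow> complex \<Rightarrow> 'a \<Rightarrow> bool" where
  "radial_expansion f \<zeta> w \<longleftrightarrow>
     (\<exists>M. \<forall>\<^sub>F t in at_right 0. norm (f (of_real (1 - t) * \<zeta>) - (f \<zeta> - t *\<^sub>R w)) \<le> M * t\<^sup>2)"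

lemma radial_expansion_tendsto:
  assumes "radial_expansion f \<zeta> w"
  shows "((\<lambda>t. f (of_real (1 - t) * \<zeta>)) \<longlongrightarrow> f \<zeta>) (at_right 0)"
proof -
  obtain M where M: "\<forall>\<^sub>F t in at_right 0. norm (f (of_real (1 - t) * \<zeta>) - (f \<zeta> - t *\<^sub>R w)) \<le> M * t\<^sup>2"
    using assms unfolding radial_expansion_def by blast
  have "((\<lambda>t. M * t\<^sup>2) \<longlongrightarrow> 0) (at_right 0)"
    by (auto intro!: tendsto_eq_intros)
  with M have "((\<lambda>t. f (of_real (1 - t) * \<zeta>) - (f \<zeta> - t *\<^sub>R w)) \<longlongrightarrow> 0) (at_right 0)"
    by (rule Lim_null_comparison)
  moreover have "((\<lambda>t. f \<zeta> - t *\<^sub>R w) \<longlongrightarrow> f \<zeta>) (at_right 0)"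
    by (auto intro!: tendsto_eq_intros)
  ultimately show ?thesis
    using tendsto_add by fastforce
qed

text \<open>A Hopf-type lemma: by Schwarz--Pick, 1 - |\<phi> z|^2 at z = (1 - t) \<zeta> is at least a positive
  multiple of t, and it is at most 2 (1 - Re (\<phi> z)).\<close>

lemma Hopf_lemma_disc:
  fixes \<phi> :: "complex \<Rightarrow> complex"
  assumes hol: "\<phi> holomorphic_on ball 0 1" and lt1: "\<And>z. norm z < 1 \<Longrightarrow> norm (\<phi> z) < 1"
    and \<zeta>: "cmod \<zeta> = 1"
    and near: "\<forall>\<^sub>F t in at_right 0. 1 - Re (\<phi> (of_real (1 - t) * \<zeta>)) \<le> t * \<alpha> + M * t\<^sup>2"
  shows "0 < \<alpha>"
proof -
  define c where "c = (1 - norm (\<phi> 0)) / (1 + norm (\<phi> 0))"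
  have "0 < c"
    unfolding c_def using lt1[of 0] by (simp add: add_pos_nonneg)
  have "\<forall>\<^sub>F t in at_right 0. c / 2 - M * t \<le> \<alpha>"
    using near eventually_at_right_real[OF zero_less_one]
  proof eventually_elim
    case (elim t)
    define z where "z = of_real (1 - t) * \<zeta>"
    have z: "norm z = 1 - t" "norm z < 1"
      using elim \<zeta> by (simp_all add: z_def norm_mult del: of_real_diff)
    have "t * c \<le> 1 - norm (\<phi> z) ^ 2"
      using Schwarz_Pick_boundary_bound[OF hol lt1 z(2)] z(1) unfolding c_def by simp
    also have "\<dots> = (1 - norm (\<phi> z)) * (1 + norm (\<phi> z))"
      by (simp add: power2_eq_square algebra_simps)
    also have "\<dots> \<le> (1 - norm (\<phi> z)) * 2"
      using lt1[OF z(2)] by (intro mult_left_mono) auto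
    also have "\<dots> \<le> 2 * (1 - Re (\<phi> z))"
      using complex_Re_le_cmod[of "\<phi> z"] by simp
    also have "\<dots> \<le> t * (2 * \<alpha> + 2 * M * t)"
      using elim by (simp add: z_def power2_eq_square algebra_simps)
    finally have "c \<le> 2 * \<alpha> + 2 * M * t"
      using elim by (simp add: mult_le_cancel_left_pos)
    then show ?case
      by simp
  qed
  moreover have "((\<lambda>t. c / 2 - M * t) \<longlongrightarrow> c / 2) (at_right 0)"
    by (auto intro!: tendsto_eq_intros)
  ultimately have "c / 2 \<le> \<alpha>"
    by (intro tendsto_upperbound) (auto simp: trivial_limit_at_right_real)
  with \<open>0 < c\<close> show ?thesis
    by simp
qed

lemma radial_expansion_inner_pos:
  fixes f :: "complex \<Rightarrow> complex ^ 'n"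
  assumes hol: "\<And>j. (\<lambda>z. f z $ j) holomorphic_on ball 0 1"
    and ball: "\<And>z. z \<in> ball 0 1 \<Longrightarrow> norm (f z) < 1"
    and \<zeta>: "cmod \<zeta> = 1" "norm (f \<zeta>) = 1" and exp: "radial_expansion f \<zeta> w"
  shows "0 < Re (cinner w (f \<zeta>))"
proof -
  obtain M where M: "\<forall>\<^sub>F t in at_right 0. norm (f (of_real (1 - t) * \<zeta>) - (f \<zeta> - t *\<^sub>R w)) \<le> M * t\<^sup>2"
    using exp unfolding radial_expansion_def by blast
  show ?thesis
  proof (rule Hopf_lemma_disc[where \<phi> = "\<lambda>z. cinner (f z) (f \<zeta>)" and M = M])
    show "(\<lambda>z. cinner (f z) (f \<zeta>)) holomorphic_on ball 0 1"
      unfolding cinner_def by (intro holomorphic_intros hol)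
    show "norm (cinner (f z) (f \<zeta>)) < 1" if "norm z < 1" for z
      using that \<zeta> ball by (intro norm_cinner_less_one) auto
    show "\<forall>\<^sub>F t in at_right 0.
        1 - Re (cinner (f (of_real (1 - t) * \<zeta>)) (f \<zeta>)) \<le> t * Re (cinner w (f \<zeta>)) + M * t\<^sup>2"
      using M
    proof eventually_elim
      case (elim t)
      define e where "e = f (of_real (1 - t) * \<zeta>) - (f \<zeta> - t *\<^sub>R w)"
      have "cinner (f \<zeta>) (f \<zeta>) = 1"
        using \<zeta> by (simp add: cinner_self)
      then have "cinner (f (of_real (1 - t) * \<zeta>)) (f \<zeta>)
          = 1 - of_real t * cinner w (f \<zeta>) + cinner e (f \<zeta>)"
        unfolding e_def by (simp add: cinner_diff_left cinner_scaleR_left)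
      moreover have "- Re (cinner e (f \<zeta>)) \<le> M * t\<^sup>2"
        using elim norm_cinner_le[of e "f \<zeta>"] abs_Re_le_cmod[of "cinner e (f \<zeta>)"] \<zeta>
        by (simp add: e_def)
      ultimately show ?case
        by simp
    qed
  qed (use \<zeta> in simp)
qed

lemma radial_expansion_of_extension:
  fixes g f :: "complex \<Rightarrow> 'b::real_normed_vector"
  assumes U: "open U" "cball 0 1 \<subseteq> U" and gD: "\<And>x. x \<in> U \<Longrightarrow> (g has_derivative D x) (at x)"
    and Dv: "(\<lambda>y. D y (- \<zeta>)) differentiable (at \<zeta>)"
    and gf: "\<And>x. x \<in> cball 0 1 \<Longrightarrow> g x = f x" and \<zeta>: "cmod \<zeta> = 1"
  shows "radial_expansion f \<zeta> (D \<zeta> \<zeta>)"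
proof -
  have "\<zeta> \<in> U"
    using U \<zeta> by auto
  obtain M where "\<forall>\<^sub>F t in at 0. norm (g (\<zeta> + t *\<^sub>R - \<zeta>) - g \<zeta> - t *\<^sub>R D \<zeta> (- \<zeta>)) \<le> M * t\<^sup>2"
    using has_derivative_quadratic_remainder[OF U(1) \<open>\<zeta> \<in> U\<close> gD Dv] by blast
  then have "\<forall>\<^sub>F t in at_right 0. norm (g (\<zeta> + t *\<^sub>R - \<zeta>) - g \<zeta> - t *\<^sub>R D \<zeta> (- \<zeta>)) \<le> M * t\<^sup>2"
    by (simp add: eventually_at_split)
  with eventually_at_right_real[OF zero_less_one]
  have "\<forall>\<^sub>F t in at_right 0. norm (f (of_real (1 - t) * \<zeta>) - (f \<zeta> - t *\<^sub>R D \<zeta> \<zeta>)) \<le> M * t\<^sup>2"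
  proof eventually_elim
    case (elim t)
    have "\<zeta> + t *\<^sub>R - \<zeta> = of_real (1 - t) * \<zeta>"
      by (simp add: scaleR_conv_of_real algebra_simps)
    moreover have "of_real (1 - t) * \<zeta> \<in> cball 0 1" "\<zeta> \<in> cball 0 1"
      using elim \<zeta> by (simp_all add: norm_mult del: of_real_diff)
    moreover have "D \<zeta> (- \<zeta>) = - D \<zeta> \<zeta>"
      using linear_simps(4)[OF has_derivative_bounded_linear[OF gD[OF \<open>\<zeta> \<in> U\<close>]]] .
    ultimately show ?case
      using elim gf by (simp add: algebra_simps)
  qed
  then show ?thesis
    unfolding radial_expansion_def ..
qed

text \<open>Complex linearity of the derivative at \<zeta> maps the tangent \<zeta> * \<i> of the circle to
  \<i> * D \<zeta> \<zeta>, which is orthogonal to f \<zeta> because |f| = 1 on the circle.\<close>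

lemma radial_derivative_inner_real:
  fixes g f :: "complex \<Rightarrow> complex ^ 'n" and D :: "complex \<Rightarrow> complex \<Rightarrow> complex ^ 'n"
  assumes gD: "\<And>x. x \<in> cball 0 1 \<Longrightarrow> (g has_derivative D x) (at x)"
    and cont: "\<And>h. continuous_on (cball 0 1) (\<lambda>x. D x h)"
    and hol: "\<And>j. (\<lambda>z. f z $ j) holomorphic_on ball 0 1"
    and gf: "\<And>x. x \<in> cball 0 1 \<Longrightarrow> g x = f x"
    and sphere: "\<And>x. cmod x = 1 \<Longrightarrow> norm (f x) = 1" and \<zeta>: "cmod \<zeta> = 1"
  shows "Im (cinner (D \<zeta> \<zeta>) (f \<zeta>)) = 0"
proof -
  have \<zeta>_in: "\<zeta> \<in> closure (ball 0 1)"
    using \<zeta> by simp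
  have "(\<lambda>z. g z $ j) holomorphic_on ball 0 1" for j
    using hol by (rule holomorphic_transform) (simp add: gf)
  then have lin: "D \<zeta> h $ j = h * D \<zeta> 1 $ j" for h j
    using gD cont \<zeta>_in by (intro has_derivative_complex_linear_on_closure[of "ball 0 1" g D]) auto
  have "D \<zeta> (\<zeta> * \<i>) $ j = \<i> * D \<zeta> \<zeta> $ j" for j
    using lin[of "\<zeta> * \<i>" j] lin[of \<zeta> j] by simp
  then have "cinner (D \<zeta> (\<zeta> * \<i>)) (f \<zeta>) = \<i> * cinner (D \<zeta> \<zeta>) (f \<zeta>)"
    unfolding cinner_def by (simp add: sum_distrib_left mult.assoc)
  moreover have "inner (D \<zeta> (\<zeta> * \<i>)) (g \<zeta>) = 0"
  proof (rule has_derivative_orthogonal_circle)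
    show "(g has_derivative D \<zeta>) (at \<zeta>)"
      using gD \<zeta> by simp
    show "norm (g (\<zeta> * cis \<theta>)) = 1" for \<theta>
      using gf[of "\<zeta> * cis \<theta>"] sphere[of "\<zeta> * cis \<theta>"] \<zeta> by (simp add: norm_mult)
  qed
  ultimately show ?thesis
    using Re_cinner[of "D \<zeta> (\<zeta> * \<i>)" "f \<zeta>"] gf[of \<zeta>] \<zeta> by simp
qed

lemma embedding_map_norm_less_one:
  assumes "embedding_map f V" and "z \<in> ball 0 1"
  shows "norm (f z) < 1"
proof -
  have "V \<subseteq> ball 0 1" "f z \<in> V"
    using assms unfolding embedding_map_def DA_variety_def by auto
  then show ?thesis
    by auto
qed

lemma embedding_map_radial_expansion:
  assumes emb: "embedding_map f V" and \<zeta>: "cmod \<zeta> = 1"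
  obtains w \<alpha> where "radial_expansion f \<zeta> w" and "cinner w (f \<zeta>) = of_real \<alpha>" and "0 < \<alpha>"
proof -
  have hol: "\<And>j. (\<lambda>z. f z $ j) holomorphic_on ball 0 1"
    and sphere: "\<And>x. cmod x = 1 \<Longrightarrow> norm (f x) = 1"
    using emb unfolding embedding_map_def by auto
  obtain U g where U: "open U" "cball 0 1 \<subseteq> U" and C2: "C2_on U g"
    and gf: "\<And>x. x \<in> cball 0 1 \<Longrightarrow> g x = f x"
    using emb unfolding embedding_map_def by blast
  obtain D where gD: "\<And>x. x \<in> U \<Longrightarrow> (g has_derivative D x) (at x)"
    and Dv: "\<And>v x. x \<in> U \<Longrightarrow> (\<lambda>y. D y v) differentiable (at x)"
    using C2_onE[OF C2 U(1)] by blast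
  have "\<zeta> \<in> U"
    using U \<zeta> by auto
  have exp: "radial_expansion f \<zeta> (D \<zeta> \<zeta>)"
    using U gD Dv[OF \<open>\<zeta> \<in> U\<close>] gf \<zeta> by (rule radial_expansion_of_extension)
  have "continuous_on (cball 0 1) (\<lambda>x. D x h)" for h
  proof (intro continuous_at_imp_continuous_on ballI)
    fix x :: complex assume "x \<in> cball 0 1"
    then show "isCont (\<lambda>x. D x h) x"
      using U Dv[of x h] by (intro differentiable_imp_continuous_within) auto
  qed
  then have "Im (cinner (D \<zeta> \<zeta>) (f \<zeta>)) = 0"
    using U gD hol gf sphere \<zeta> by (intro radial_derivative_inner_real[of g D]) auto
  moreover have "0 < Re (cinner (D \<zeta> \<zeta>) (f \<zeta>))"
    using hol embedding_map_norm_less_one[OF emb] \<zeta> sphere[OF \<zeta>] exp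
    by (rule radial_expansion_inner_pos)
  ultimately show thesis
    using exp by (intro that[of "D \<zeta> \<zeta>" "Re (cinner (D \<zeta> \<zeta>) (f \<zeta>))"]) (simp_all add: complex_eq_iff)
qed

lemma filterlim_divide_at_right_0:
  fixes c :: real
  assumes "0 < c"
  shows "filterlim (\<lambda>x. x / c) (at_right 0) (at_right 0)"
proof -
  have "filtermap (times (inverse c)) (at_right 0) = at_right 0"
    using filtermap_times_pos_at_right[of "inverse c" 0] assms by simp
  then show ?thesis
    unfolding filterlim_def by (simp add: divide_inverse_commute)
qed

lemma eventually_radial_path_in_ball:
  assumes "cmod \<zeta> = 1" and "0 < c"
  shows "\<forall>\<^sub>F l in at_right 0. of_real (1 - l / c) * \<zeta> \<in> ball 0 1"
proof -
  have "\<forall>\<^sub>F t in at_right 0. of_real (1 - t) * \<zeta> \<in> ball 0 1"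
    using eventually_at_right_real[OF zero_less_one]
    by eventually_elim (use assms(1) in \<open>simp add: norm_mult del: of_real_diff\<close>)
  then show ?thesis
    using filterlim_divide_at_right_0[OF assms(2)] by (rule eventually_compose_filterlim)
qed

lemma eventually_quadratic_bound_rescale:
  fixes e :: "real \<Rightarrow> real"
  assumes e: "\<forall>\<^sub>F t in at_right 0. e t \<le> C * t\<^sup>2"
    and "C \<le> M" "0 \<le> M" and \<alpha>: "0 < \<alpha>" "1 / \<alpha> \<le> \<sigma>"
  shows "\<forall>\<^sub>F l in at_right 0. e (l / \<alpha>) \<le> M * (l * \<sigma>)\<^sup>2"
proof -
  have "\<forall>\<^sub>F l in at_right 0. e (l / \<alpha>) \<le> C * (l / \<alpha>)\<^sup>2"
    using e filterlim_divide_at_right_0[OF \<alpha>(1)] by (rule eventually_compose_filterlim)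
  with eventually_at_right_real[OF zero_less_one] show ?thesis
  proof eventually_elim
    case (elim l)
    have "l / \<alpha> \<le> l * \<sigma>"
      using elim mult_left_mono[OF \<alpha>(2), of l] by (simp add: divide_inverse_commute)
    then have "C * (l / \<alpha>)\<^sup>2 \<le> M * (l * \<sigma>)\<^sup>2"
      using elim \<alpha> assms(2,3) by (intro mult_mono power_mono) auto
    with elim show ?case
      by linarith
  qed
qed

lemma lcnorm2_kf_radial_pair_bounded:
  fixes f :: "complex \<Rightarrow> complex ^ 'n"
  assumes ball: "\<And>z. z \<in> ball 0 1 \<Longrightarrow> norm (f z) < 1"
    and \<zeta>: "cmod \<zeta>1 = 1" "cmod \<zeta>2 = 1" and p: "norm p = 1" "f \<zeta>1 = p" "f \<zeta>2 = p"
    and exp: "radial_expansion f \<zeta>1 w1" "radial_expansion f \<zeta>2 w2"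
    and w: "cinner w1 p = of_real \<alpha>1" "0 < \<alpha>1" "cinner w2 p = of_real \<alpha>2" "0 < \<alpha>2"
  shows "\<exists>B. \<forall>\<^sub>F l in at_right 0.
    lcnorm2 (kf f) [(1, of_real (1 - l / \<alpha>1) * \<zeta>1), (-1, of_real (1 - l / \<alpha>2) * \<zeta>2)] \<le> B"
proof -
  obtain M1 M2 where
    M1: "\<forall>\<^sub>F t in at_right 0. norm (f (of_real (1 - t) * \<zeta>1) - (p - t *\<^sub>R w1)) \<le> M1 * t\<^sup>2" and
    M2: "\<forall>\<^sub>F t in at_right 0. norm (f (of_real (1 - t) * \<zeta>2) - (p - t *\<^sub>R w2)) \<le> M2 * t\<^sup>2"
    using exp unfolding radial_expansion_def p(2,3) by blast
  define M W \<sigma> K where "M = max (max M1 M2) 0" and "W = max (norm w1) (norm w2)"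
    and "\<sigma> = 1 / \<alpha>1 + 1 / \<alpha>2" and "K = W\<^sup>2 + M * (2 + W)"
  have M: "M1 \<le> M" "M2 \<le> M" and M0: "0 \<le> M" and \<sigma>: "1 / \<alpha>1 \<le> \<sigma>" "1 / \<alpha>2 \<le> \<sigma>"
    using w by (simp_all add: M_def \<sigma>_def)
  have small: "\<forall>\<^sub>F l in at_right 0. l * \<sigma> < 1 \<and> l * \<sigma>\<^sup>2 * K < 1"
    by (intro eventually_conj order_tendstoD(2)) (auto intro!: tendsto_eq_intros)
  have "\<forall>\<^sub>F l in at_right 0.
      lcnorm2 (kf f) [(1, of_real (1 - l / \<alpha>1) * \<zeta>1), (-1, of_real (1 - l / \<alpha>2) * \<zeta>2)] \<le> 2 * K * \<sigma>\<^sup>2"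
    using eventually_at_right_real[OF zero_less_one] small
      eventually_quadratic_bound_rescale[OF M1 M(1) M0 w(2) \<sigma>(1)]
      eventually_quadratic_bound_rescale[OF M2 M(2) M0 w(4) \<sigma>(2)]
      eventually_radial_path_in_ball[OF \<zeta>(1) w(2)]
      eventually_radial_path_in_ball[OF \<zeta>(2) w(4)]
  proof eventually_elim
    case (elim l)
    have "lcnorm2 DA_kernel [(1, f (of_real (1 - l / \<alpha>1) * \<zeta>1)), (-1, f (of_real (1 - l / \<alpha>2) * \<zeta>2))]
        \<le> 2 * K * \<sigma>\<^sup>2"
      unfolding K_def \<sigma>_def
      by (rule lcnorm2_DA_kernel_pair_le)
        (use elim[unfolded K_def \<sigma>_def] p(1) w ball in \<open>auto simp: W_def M_def less_imp_le\<close>)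
    then show ?case
      by (simp add: lcnorm2_kf)
  qed
  then show ?thesis ..
qed

lemma in_rkhs_kf_radial_diff_tendsto_zero:
  fixes f :: "complex \<Rightarrow> complex ^ 'n"
  assumes ball: "\<And>z. z \<in> ball 0 1 \<Longrightarrow> norm (f z) < 1" and h: "in_rkhs (ball 0 1) (kf f) h"
    and \<zeta>: "cmod \<zeta>1 = 1" "cmod \<zeta>2 = 1" and p: "norm p = 1" "f \<zeta>1 = p" "f \<zeta>2 = p"
    and exp: "radial_expansion f \<zeta>1 w1" "radial_expansion f \<zeta>2 w2"
    and w: "cinner w1 p = of_real \<alpha>1" "0 < \<alpha>1" "cinner w2 p = of_real \<alpha>2" "0 < \<alpha>2"
  shows "((\<lambda>l. h (of_real (1 - l / \<alpha>1) * \<zeta>1) - h (of_real (1 - l / \<alpha>2) * \<zeta>2)) \<longlongrightarrow> 0) (at_right 0)"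
proof -
  obtain B where bounded: "\<forall>\<^sub>F l in at_right 0.
      lcnorm2 (kf f) [(1, of_real (1 - l / \<alpha>1) * \<zeta>1), (-1, of_real (1 - l / \<alpha>2) * \<zeta>2)] \<le> B"
    using lcnorm2_kf_radial_pair_bounded[OF ball \<zeta> p exp w] by blast
  have path_lim: "((\<lambda>l. f (of_real (1 - l / \<alpha>) * \<zeta>)) \<longlongrightarrow> p) (at_right 0)"
    if "radial_expansion f \<zeta> w" "f \<zeta> = p" "0 < \<alpha>" for \<zeta> w \<alpha>
    using filterlim_compose[OF radial_expansion_tendsto[OF that(1)]
        filterlim_divide_at_right_0[OF that(3)]]
    by (simp add: that(2))
  show ?thesis
  proof (rule in_rkhs_diff_tendsto_zero[OF kf_cnj lcnorm2_kf_nonneg[OF ball] h _ bounded])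
    show "\<forall>\<^sub>F l in at_right 0.
        of_real (1 - l / \<alpha>1) * \<zeta>1 \<in> ball 0 1 \<and> of_real (1 - l / \<alpha>2) * \<zeta>2 \<in> ball 0 1"
      using eventually_radial_path_in_ball[OF \<zeta>(1) w(2)] eventually_radial_path_in_ball[OF \<zeta>(2) w(4)]
      by (rule eventually_conj)
  next
    fix v :: complex assume "v \<in> ball 0 1"
    then have "cinner p (f v) \<noteq> 1"
      using norm_cinner_le[of p "f v"] ball p(1) by force
    then have "((\<lambda>l. DA_kernel (f (of_real (1 - l / \<alpha>1) * \<zeta>1)) (f v)
        - DA_kernel (f (of_real (1 - l / \<alpha>2) * \<zeta>2)) (f v))
        \<longlongrightarrow> DA_kernel p (f v) - DA_kernel p (f v)) (at_right 0)"
      using path_lim[OF exp(1) p(2) w(2)] path_lim[OF exp(2) p(3) w(4)]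
      by (intro tendsto_diff tendsto_DA_kernel_left)
    then show "((\<lambda>l. kf f (of_real (1 - l / \<alpha>1) * \<zeta>1) v - kf f (of_real (1 - l / \<alpha>2) * \<zeta>2) v) \<longlongrightarrow> 0)
        (at_right 0)"
      by (simp add: kf_def DA_kernel_def)
  qed
qed

theorem theorem2p1:
  fixes V :: "(complex ^ 'n) set" and f :: "complex \<Rightarrow> complex ^ 'n"
    and h :: "complex \<Rightarrow> complex" and L1 L2 :: complex
  assumes "embedding_map f V"
    and "f (-1) = f 1"
    and "in_rkhs (ball 0 1) (kf f) h"
    and "((\<lambda>r. h (complex_of_real r)) \<longlongrightarrow> L1) (at_left 1)"
    and "((\<lambda>r. h (- complex_of_real r)) \<longlongrightarrow> L2) (at_left 1)"
  shows "L1 = L2"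
proof -
  obtain w1 \<alpha>1 where 1: "radial_expansion f 1 w1" "cinner w1 (f 1) = of_real \<alpha>1" "0 < \<alpha>1"
    using embedding_map_radial_expansion[OF assms(1), of 1] by auto
  obtain w2 \<alpha>2 where 2: "radial_expansion f (-1) w2" "cinner w2 (f 1) = of_real \<alpha>2" "0 < \<alpha>2"
    using embedding_map_radial_expansion[OF assms(1), of "-1"] assms(2) by auto
  have "norm (f 1) = 1"
    using assms(1) unfolding embedding_map_def by simp
  then have "((\<lambda>l. h (of_real (1 - l / \<alpha>1) * 1) - h (of_real (1 - l / \<alpha>2) * -1)) \<longlongrightarrow> 0) (at_right 0)"
    using embedding_map_norm_less_one[OF assms(1)] assms(2,3) 1 2
    by (intro in_rkhs_kf_radial_diff_tendsto_zero[where p = "f 1"]) auto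
  moreover have "filterlim (\<lambda>l. 1 - l / \<alpha>) (at_left 1) (at_right 0)" if "0 < \<alpha>" for \<alpha> :: real
    using that by (intro tendsto_imp_filterlim_at_left)
      (auto intro!: tendsto_eq_intros simp: eventually_at_filter)
  then have "((\<lambda>l. h (of_real (1 - l / \<alpha>1))) \<longlongrightarrow> L1) (at_right 0)"
    and "((\<lambda>l. h (- of_real (1 - l / \<alpha>2))) \<longlongrightarrow> L2) (at_right 0)"
    using filterlim_compose[OF assms(4)] filterlim_compose[OF assms(5)] 1(3) 2(3) by blast+
  then have "((\<lambda>l. h (of_real (1 - l / \<alpha>1) * 1) - h (of_real (1 - l / \<alpha>2) * -1))
      \<longlongrightarrow> L1 - L2) (at_right 0)"
    unfolding mult_1_right mult_minus1_right by (rule tendsto_diff)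
  ultimately show "L1 = L2"
    using tendsto_unique[OF trivial_limit_at_right_real] by fastforce
qed

end
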